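(* Let $(K,S^0)$ be a divided simplicial complex with associated layered complex $(K,C,S)$, and let $(X,\Sigma)$ be a filtered space. Suppose there exists a layered formal deformation from $(K,C,S)$ to a layered complex $(K',C',S')$ (associated to a divided complex) whose filtered space $(|K'|,|S'|)$, with formal codimension $\operatorname{codim}|S'|=\operatorname{codim}_X\Sigma$, is stratified homotopy equivalent to $(X,\Sigma)$. Then, assigning formal codimension $\operatorname{codim}_{|K|}|S|:=\operatorname{codim}|S'|$, the intersection homology of the filtered space $(|K|,|S|)$ is isomorphic to that of $(X,\Sigma)$: $IH^{\bar p}_*(|K|)\cong IH^{\bar p}_*(X)$ for every perversity $\bar p$.
   Context: A simplicial complex $K$ is a set of finite nonempty sets (simplices) closed under passing to nonempty subsets (faces); $K^0$ is its vertex set; $t<s$ means proper face; $|K|$ is the geometric realization. A simplex is principal in $K$ if it is not a proper face of any simplex of $K$; $s$ is free in $K$ if it is a proper face of a principal simplex $p$ and of no other simplex of $K$. A layered simplicial complex is $(K,C,S)$ with $C,S$ disjoint subcomplexes of $K$; $\mathrm{IM}(K,C,S)$ denotes simplices in neither $C$ nor $S$. A divided simplicial complex is $(K,S^0)$ with $S^0\subseteq K^0$; its associated layered complex has $S$ = simplices with all vertices in $S^0$, $C$ = simplices with all vertices in $K^0-S^0$. An elementary $S$-collapse replaces $(K,C,S)$ by $(K-\{s,p\},C,S-\{s,p\})$ with $p\in S$ principal in $K$ and $s$ a face of $p$ free in $K$; an elementary $C$-collapse is symmetric with $p\in C$. For $(K,C,S)$ associated to a divided complex, an elementary intermediate collapse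 replaces it by $(K-\{s,p\},C,S)$ where (i) $p\in\mathrm{IM}(K,C,S)$, (ii) $p$ is principal in $K$, (iii) $s$ is a face of $p$ free in $K$, (iv) every $t\in S$ with $t<p$ satisfies $t<s$. Elementary layered collapses are elementary $S$-, $C$- or intermediate collapses, their inverses elementary layered expansions; a layered formal deformation is a finite sequence of layered complexes each obtained from the previous by an elementary layered collapse or expansion. A filtered space here is a pair $(X,\Sigma)$, $X$ Hausdorff, $\Sigma\subseteq X$ closed, with a formal dimension and a formal codimension $k=\operatorname{codim}_X\Sigma\ge1$. A stratified map $f:(X,\Sigma_X)\to(Y,\Sigma_Y)$ is continuous with $f(\Sigma_X)\subseteq\Sigma_Y$, $f(X-\Sigma_X)\subseteq Y-\Sigma_Y$; codimension-preserving if formal codimensions agree; a stratified homotopy is a stratified map $(X\times I,\Sigma_X\times I)\to(Y,\Sigma_Y)$; a stratified homotopy equivalence is a codimension-preserving stratified map $f$ with a stratified $g$ such that $g\circ f$, $f\circ g$ are stratified homotopic to identities. Strata of $(X,\Sigma)$: connected components of $X-\Sigma$ (codimension $0$) and of $\Sigma$ (codimension $k$). A perversity is $\bar p:\{0,1,2,\dots\}\to\mathbb Z$ with $\bar p(0)=0$. A singular $i$-simplex $\sigma:\Delta^i\to X$ is $\bar p$-allowable if for every stratum $Z$, $\sigma^{-1}(Z)$ lies in the union of the $(i-\operatorname{codim}Z+\bar p(\operatorname{codim}Z))$-dimensional faces of $\Delta^i$; a chain is allowable if all its simplices with nonzero coefficient are. $IC^{\bar p}_i(X)$ consists of singular chains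 $\xi$ with $\xi,\partial\xi$ allowable, and $IH^{\bar p}_*(X)$ is its homology. *)

theory Defs
  imports "HOL-Analysis.Analysis" "HOL-Homology.Homology"
begin

definition simplicial_complex :: "'v set set \<Rightarrow> bool" where
  "simplicial_complex K \<longleftrightarrow> finite K \<and>
     (\<forall>s\<in>K. finite s \<and> s \<noteq> {}) \<and>
     (\<forall>s\<in>K. \<forall>t. t \<subseteq> s \<and> t \<noteq> {} \<longrightarrow> t \<in> K)"

definition vertices :: "'v set set \<Rightarrow> 'v set" where
  "vertices K = \<Union>K"

definition subcomplex :: "'v set set \<Rightarrow> 'v set set \<Rightarrow> bool" where
  "subcomplex L K \<longleftrightarrow> L \<subseteq> K \<and> simplicial_complex L"

definition principal :: "'v set set \<Rightarrow> 'v set \<Rightarrow> bool" where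
  "principal K s \<longleftrightarrow> s \<in> K \<and> \<not> (\<exists>t\<in>K. s \<subset> t)"

definition free_in :: "'v set set \<Rightarrow> 'v set \<Rightarrow> 'v set \<Rightarrow> bool" where
  "free_in K s p \<longleftrightarrow> s \<in> K \<and> principal K p \<and> s \<subset> p \<and> (\<forall>t\<in>K. s \<subset> t \<longrightarrow> t = p)"

type_synonym 'v layered = "'v set set \<times> 'v set set \<times> 'v set set"

definition layered_complex :: "'v layered \<Rightarrow> bool" where
  "layered_complex L \<longleftrightarrow> (case L of (K, C, S) \<Rightarrow>
     simplicial_complex K \<and> subcomplex C K \<and> subcomplex S K \<and> C \<inter> S = {})"

definition divided_complex :: "'v set set \<Rightarrow> 'v set \<Rightarrow> bool" where
  "divided_complex K S0 \<longleftrightarrow> simplicial_complex K \<and> S0 \<subseteq> vertices K"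

definition associated_layered :: "'v set set \<Rightarrow> 'v set \<Rightarrow> 'v layered" where
  "associated_layered K S0 =
     (K, {s\<in>K. s \<subseteq> vertices K - S0}, {s\<in>K. s \<subseteq> S0})"

definition assoc_to_divided :: "'v layered \<Rightarrow> bool" where
  "assoc_to_divided L \<longleftrightarrow> (\<exists>K S0. divided_complex K S0 \<and> L = associated_layered K S0)"

definition IM :: "'v layered \<Rightarrow> 'v set set" where
  "IM L = (case L of (K, C, S) \<Rightarrow> K - C - S)"

definition elem_S_collapse :: "'v layered \<Rightarrow> 'v layered \<Rightarrow> bool" where
  "elem_S_collapse L L' \<longleftrightarrow> layered_complex L \<and> (case L of (K, C, S) \<Rightarrow>
     (\<exists>s p. p \<in> S \<and> principal K p \<and> free_in K s p \<and>
        L' = (K - {s, p}, C, S - {s, p})))"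

definition elem_C_collapse :: "'v layered \<Rightarrow> 'v layered \<Rightarrow> bool" where
  "elem_C_collapse L L' \<longleftrightarrow> layered_complex L \<and> (case L of (K, C, S) \<Rightarrow>
     (\<exists>s p. p \<in> C \<and> principal K p \<and> free_in K s p \<and>
        L' = (K - {s, p}, C - {s, p}, S)))"

definition elem_IM_collapse :: "'v layered \<Rightarrow> 'v layered \<Rightarrow> bool" where
  "elem_IM_collapse L L' \<longleftrightarrow> assoc_to_divided L \<and> (case L of (K, C, S) \<Rightarrow>
     (\<exists>s p. p \<in> IM L \<and> principal K p \<and> free_in K s p \<and>
        (\<forall>t\<in>S. t \<subset> p \<longrightarrow> t \<subset> s) \<and>
        L' = (K - {s, p}, C, S)))"

definition elem_layered_collapse :: "'v layered \<Rightarrow> 'v layered \<Rightarrow> bool" where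
  "elem_layered_collapse L L' \<longleftrightarrow>
     elem_S_collapse L L' \<or> elem_C_collapse L L' \<or> elem_IM_collapse L L'"

definition layered_step :: "'v layered \<Rightarrow> 'v layered \<Rightarrow> bool" where
  "layered_step L L' \<longleftrightarrow> elem_layered_collapse L L' \<or> elem_layered_collapse L' L"

definition layered_formal_deformation :: "'v layered \<Rightarrow> 'v layered \<Rightarrow> bool" where
  "layered_formal_deformation L L' \<longleftrightarrow> layered_step\<^sup>*\<^sup>* L L'"

definition realization :: "'v set set \<Rightarrow> ('v \<Rightarrow> real) set" where
  "realization K = {f. (\<forall>v. 0 \<le> f v) \<and> {v. f v \<noteq> 0} \<in> K \<and> sum f {v. f v \<noteq> 0} = 1}"

definition realization_top :: "'v set set \<Rightarrow> ('v \<Rightarrow> real) topology" where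
  "realization_top K = subtopology (powertop_real UNIV) (realization K)"

text \<open>A filtered space (X, \<Sigma>) with formal codimension k.\<close>
definition filtered_space :: "'a topology \<Rightarrow> 'a set \<Rightarrow> nat \<Rightarrow> bool" where
  "filtered_space X \<Sigma> k \<longleftrightarrow> Hausdorff_space X \<and> closedin X \<Sigma> \<and> 1 \<le> k"

definition stratified_map ::
  "'a topology \<Rightarrow> 'a set \<Rightarrow> 'b topology \<Rightarrow> 'b set \<Rightarrow> ('a \<Rightarrow> 'b) \<Rightarrow> bool" where
  "stratified_map X \<Sigma>X Y \<Sigma>Y f \<longleftrightarrow> continuous_map X Y f \<and>
     f ` \<Sigma>X \<subseteq> \<Sigma>Y \<and> f ` (topspace X - \<Sigma>X) \<subseteq> topspace Y - \<Sigma>Y"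

definition stratified_homotopic ::
  "'a topology \<Rightarrow> 'a set \<Rightarrow> 'b topology \<Rightarrow> 'b set \<Rightarrow> ('a \<Rightarrow> 'b) \<Rightarrow> ('a \<Rightarrow> 'b) \<Rightarrow> bool" where
  "stratified_homotopic X \<Sigma>X Y \<Sigma>Y f g \<longleftrightarrow>
     (\<exists>h. stratified_map (prod_topology X (top_of_set {0..1::real})) (\<Sigma>X \<times> {0..1}) Y \<Sigma>Y h \<and>
          (\<forall>x\<in>topspace X. h (x, 0) = f x \<and> h (x, 1) = g x))"

definition stratified_homotopy_equivalent ::
  "'a topology \<Rightarrow> 'a set \<Rightarrow> nat \<Rightarrow> 'b topology \<Rightarrow> 'b set \<Rightarrow> nat \<Rightarrow> bool" where
  "stratified_homotopy_equivalent X \<Sigma>X kX Y \<Sigma>Y kY \<longleftrightarrow> kX = kY \<and>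
     (\<exists>f g. stratified_map X \<Sigma>X Y \<Sigma>Y f \<and> stratified_map Y \<Sigma>Y X \<Sigma>X g \<and>
        stratified_homotopic X \<Sigma>X X \<Sigma>X (g \<circ> f) id \<and>
        stratified_homotopic Y \<Sigma>Y Y \<Sigma>Y (f \<circ> g) id)"

text \<open>Strata with their codimensions: components of X - \<Sigma> (codim 0) and of \<Sigma> (codim k).\<close>
definition strata :: "'a topology \<Rightarrow> 'a set \<Rightarrow> nat \<Rightarrow> ('a set \<times> nat) set" where
  "strata X \<Sigma> k =
     (\<lambda>Z. (Z, 0)) ` connected_components_of (subtopology X (topspace X - \<Sigma>)) \<union>
     (\<lambda>Z. (Z, k)) ` connected_components_of (subtopology X \<Sigma>)"

definition perversity :: "(nat \<Rightarrow> int) \<Rightarrow> bool" where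
  "perversity p \<longleftrightarrow> p 0 = 0"

text \<open>Union of the j-dimensional faces of the standard i-simplex (empty if j < 0).\<close>
definition simplex_skeleton :: "nat \<Rightarrow> int \<Rightarrow> (nat \<Rightarrow> real) set" where
  "simplex_skeleton i j =
     {x \<in> standard_simplex i. int (card {l. l \<le> i \<and> x l \<noteq> 0}) \<le> j + 1}"

definition allowable_simplex ::
  "'a topology \<Rightarrow> 'a set \<Rightarrow> nat \<Rightarrow> (nat \<Rightarrow> int) \<Rightarrow> nat \<Rightarrow> ((nat \<Rightarrow> real) \<Rightarrow> 'a) \<Rightarrow> bool" where
  "allowable_simplex X \<Sigma> k p i \<sigma> \<longleftrightarrow>
     (\<forall>(Z, c) \<in> strata X \<Sigma> k.
        {x \<in> standard_simplex i. \<sigma> x \<in> Z} \<subseteq> simplex_skeleton i (int i - int c + p c))"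

definition allowable_chain ::
  "'a topology \<Rightarrow> 'a set \<Rightarrow> nat \<Rightarrow> (nat \<Rightarrow> int) \<Rightarrow> nat \<Rightarrow> 'a chain \<Rightarrow> bool" where
  "allowable_chain X \<Sigma> k p i c \<longleftrightarrow>
     (\<forall>\<sigma> \<in> Poly_Mapping.keys c. allowable_simplex X \<Sigma> k p i \<sigma>)"

definition IC_set ::
  "'a topology \<Rightarrow> 'a set \<Rightarrow> nat \<Rightarrow> (nat \<Rightarrow> int) \<Rightarrow> nat \<Rightarrow> 'a chain set" where
  "IC_set X \<Sigma> k p i =
     {c. singular_chain i X c \<and> allowable_chain X \<Sigma> k p i c \<and>
         allowable_chain X \<Sigma> k p (i - 1) (chain_boundary i c)}"

definition IH_group ::
  "'a topology \<Rightarrow> 'a set \<Rightarrow> nat \<Rightarrow> (nat \<Rightarrow> int) \<Rightarrow> nat \<Rightarrow> 'a chain set monoid" where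
  "IH_group X \<Sigma> k p i =
     subgroup_generated (chain_group i X) {c \<in> IC_set X \<Sigma> k p i. chain_boundary i c = 0}
     Mod (chain_boundary (Suc i) ` IC_set X \<Sigma> k p (Suc i))"

end

theory Submission
  imports Defs
begin

text \<open>
  A stratified homotopy \<open>h\<close> between \<open>f\<close> and \<open>g\<close> induces a chain homotopy between
  \<open>f\<^sub>#\<close> and \<open>g\<^sub>#\<close> on intersection chains. The prism operator triangulates
  \<open>\<Delta>\<^sup>q \<times> [0,1]\<close> by \<open>q + 1\<close> simplices, each of which projects affinely onto
  \<open>\<Delta>\<^sup>q\<close> collapsing a single edge; so a simplex meeting \<open>\<Sigma>\<close> only in its \<open>j\<close>-skeleton
  produces prism simplices meeting \<open>\<Sigma>\<close> only in their \<open>(j + 1)\<close>-skeleta, which is exactly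
  the room that allowability leaves in one dimension higher. Hence stratified homotopy
  equivalent filtered spaces have isomorphic intersection homology.

  An elementary layered collapse of a free face \<open>s\<close> of a principal simplex \<open>p\<close> is
  realised by pushing \<open>|p|\<close> linearly away from \<open>s\<close>. The layering conditions ensure that
  all faces of \<open>p\<close> met by the push lie in \<open>S\<close> exactly when \<open>p\<close> does, so the push is a
  stratified deformation retraction of \<open>(|K|, |S|)\<close> onto \<open>(|K - {s, p}|, |S - {s, p}|)\<close>.
  Chaining these isomorphisms along the formal deformation and composing with the given
  equivalence proves the theorem.
\<close>

section \<open>The prism operator\<close>

text \<open>A point of \<open>\<Delta>\<^sup>q \<times> [0,1]\<close> is encoded as \<open>z\<close> with time \<open>z 0\<close> and barycentric
  coordinates \<open>z \<circ> Suc\<close>.\<close>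

definition cylinder_point :: "real \<Rightarrow> (nat \<Rightarrow> real) \<Rightarrow> nat \<Rightarrow> real" where
  "cylinder_point t y = (\<lambda>n. case n of 0 \<Rightarrow> t | Suc a \<Rightarrow> y a)"

lemma cylinder_point_simps [simp]:
  "cylinder_point t y 0 = t" "cylinder_point t y (Suc a) = y a" "cylinder_point t y \<circ> Suc = y"
  by (auto simp: cylinder_point_def)

definition cylinder_vertex :: "real \<Rightarrow> nat \<Rightarrow> nat \<Rightarrow> real" where
  "cylinder_vertex t a = cylinder_point t (\<lambda>b. if b = a then 1 else 0)"

definition face_index :: "nat \<Rightarrow> nat \<Rightarrow> nat" where
  "face_index k l = (if l < k then l else Suc l)"

text \<open>The \<open>i\<close>-th simplex of the standard triangulation of the prism has vertices
  \<open>(0, e\<^sub>0), \<dots>, (0, e\<^sub>i), (1, e\<^sub>i), \<dots>, (1, e\<^sub>q)\<close>. The relabelling \<open>d\<close> of the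
  base vertices lets the faces of a prism over \<open>\<Delta>\<^sup>q\<close> be written as prisms again.\<close>

definition prism_vertex :: "(nat \<Rightarrow> nat) \<Rightarrow> nat \<Rightarrow> nat \<Rightarrow> nat \<Rightarrow> real" where
  "prism_vertex d i j =
     (if j \<le> i then cylinder_vertex 0 (d j) else cylinder_vertex 1 (d (j - 1)))"

definition prism_chain :: "nat \<Rightarrow> (nat \<Rightarrow> nat) \<Rightarrow> (nat \<Rightarrow> real) chain" where
  "prism_chain q d =
     (\<Sum>i\<le>q. frag_cmul ((-1) ^ i) (frag_of (oriented_simplex (Suc q) (prism_vertex d i))))"

abbreviation prism_simplex :: "nat \<Rightarrow> nat \<Rightarrow> (nat \<Rightarrow> real) \<Rightarrow> nat \<Rightarrow> real" where
  "prism_simplex q i \<equiv> oriented_simplex (Suc q) (prism_vertex (\<lambda>j. j) i)"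

lemma singular_face_oriented_simplex_Suc:
  "k \<le> Suc p \<Longrightarrow>
     singular_face (Suc p) k (oriented_simplex (Suc p) l) = oriented_simplex p (l \<circ> face_index k)"
  by (simp add: singular_face_oriented_simplex face_index_def o_def if_distrib)

lemma prism_vertex_face_below:
  "k < i \<Longrightarrow> prism_vertex d i \<circ> face_index k = prism_vertex (d \<circ> face_index k) (i - 1)"
  by (auto simp: fun_eq_iff prism_vertex_def face_index_def)

lemma prism_vertex_face_above:
  "Suc i < k \<Longrightarrow> prism_vertex d i \<circ> face_index k = prism_vertex (d \<circ> face_index (k - 1)) i"
  by (auto simp: fun_eq_iff prism_vertex_def face_index_def)

lemma prism_vertex_face_diagonal:
  "prism_vertex d (Suc i) \<circ> face_index (Suc i) = prism_vertex d i \<circ> face_index (Suc i)"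
  by (auto simp: fun_eq_iff prism_vertex_def face_index_def)

lemma prism_vertex_face_top: "prism_vertex d 0 \<circ> face_index 0 = (\<lambda>j. cylinder_vertex 1 (d j))"
  by (auto simp: fun_eq_iff prism_vertex_def face_index_def)

lemma prism_vertex_face_bottom:
  "oriented_simplex p (prism_vertex d p \<circ> face_index (Suc p)) =
   oriented_simplex p (\<lambda>j. cylinder_vertex 0 (d j))"
  by (auto simp: oriented_simplex_eq prism_vertex_def face_index_def)

lemma chain_boundary_prism_chain_0:
  "chain_boundary 1 (prism_chain 0 d) =
     frag_of (oriented_simplex 0 (\<lambda>j. cylinder_vertex 1 (d j)))
   - frag_of (oriented_simplex 0 (\<lambda>j. cylinder_vertex 0 (d j)))"
  using prism_vertex_face_bottom [of 0 d]
  by (simp add: prism_chain_def chain_boundary_of singular_face_oriented_simplex_Suc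
      prism_vertex_face_top)

lemma sum_atMost_split_at:
  fixes f :: "nat \<Rightarrow> 'a::comm_monoid_add"
  assumes "i \<le> p"
  shows "(\<Sum>k\<le>i. f k) + (\<Sum>k\<in>{Suc i..p}. f k) = (\<Sum>k\<le>p. f k)"
  using sum_up_index_split [of f i "p - i"] assms by simp

lemma sum_atMost_Suc_split_around:
  fixes f :: "nat \<Rightarrow> 'a::comm_monoid_add"
  assumes "i \<le> p"
  shows "(\<Sum>k\<le>Suc p. f k) = (\<Sum>k<i. f k) + (f i + f (Suc i)) + (\<Sum>k\<in>{Suc (Suc i)..Suc p}. f k)"
  using sum_atMost_split_at [of "Suc i" "Suc p" f] assms
  by (simp add: lessThan_Suc_atMost [symmetric] add.assoc)

text \<open>In the boundary of the prism chain the faces of the \<open>i\<close>-th simplex omitting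
  \<open>(0, e\<^sub>i)\<close> or \<open>(1, e\<^sub>i)\<close> telescope to the two ends, and all other faces are
  prism simplices over faces of the base.\<close>

lemma sum_prism_faces_diagonal:
  "(\<Sum>i\<le>p. frag_of (oriented_simplex p (prism_vertex d i \<circ> face_index i))
           - frag_of (oriented_simplex p (prism_vertex d i \<circ> face_index (Suc i)))) =
   frag_of (oriented_simplex p (\<lambda>j. cylinder_vertex 1 (d j)))
   - frag_of (oriented_simplex p (\<lambda>j. cylinder_vertex 0 (d j)))"
proof -
  define F where "F i k = frag_of (oriented_simplex p (prism_vertex d i \<circ> face_index k))" for i k
  have "(\<Sum>i<p. F i i - F i (Suc i)) = (\<Sum>i<p. F i i - F (Suc i) (Suc i))"
    by (simp add: F_def prism_vertex_face_diagonal)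
  then have "(\<Sum>i\<le>p. F i i - F i (Suc i)) = F 0 0 - F p (Suc p)"
    using sum_lessThan_telescope' [of "\<lambda>i. F i i" p] by (simp add: lessThan_Suc_atMost [symmetric])
  then show ?thesis
    by (simp add: F_def prism_vertex_face_top prism_vertex_face_bottom)
qed

lemma sum_prism_faces_off_diagonal:
  fixes d :: "nat \<Rightarrow> nat" and q :: nat
  defines "c \<equiv> \<lambda>i k. frag_cmul ((-1) ^ (i + k))
                     (frag_of (oriented_simplex (Suc q) (prism_vertex d i \<circ> face_index k)))"
  shows "(\<Sum>i\<le>Suc q. \<Sum>k<i. c i k) + (\<Sum>i\<le>Suc q. \<Sum>k\<in>{Suc (Suc i)..Suc (Suc q)}. c i k) =
         - (\<Sum>k\<le>Suc q. frag_cmul ((-1) ^ k) (prism_chain q (d \<circ> face_index k)))"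
proof -
  define G where
    "G k i = frag_of (oriented_simplex (Suc q) (prism_vertex (d \<circ> face_index k) i))" for k i
  have lower: "(\<Sum>i\<le>Suc q. \<Sum>k<i. c i k) = (\<Sum>i\<le>q. \<Sum>k\<le>i. - frag_cmul ((-1) ^ (i + k)) (G k i))"
    by (simp add: sum.atMost_Suc_shift lessThan_Suc_atMost c_def G_def prism_vertex_face_below
        del: sum.atMost_Suc sum.lessThan_Suc)
  have "c i (Suc k) = - frag_cmul ((-1) ^ (i + k)) (G k i)" if "Suc i \<le> k" for i k
    using that by (simp add: c_def G_def prism_vertex_face_above)
  then have upper: "(\<Sum>i\<le>Suc q. \<Sum>k\<in>{Suc (Suc i)..Suc (Suc q)}. c i k) =
      (\<Sum>i\<le>q. \<Sum>k\<in>{Suc i..Suc q}. - frag_cmul ((-1) ^ (i + k)) (G k i))"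
    unfolding sum.atMost_Suc [of _ "Suc q"] sum.shift_bounds_cl_Suc_ivl
    by (simp del: sum.cl_ivl_Suc)
  have "(\<Sum>i\<le>Suc q. \<Sum>k<i. c i k) + (\<Sum>i\<le>Suc q. \<Sum>k\<in>{Suc (Suc i)..Suc (Suc q)}. c i k) =
      (\<Sum>i\<le>q. \<Sum>k\<le>Suc q. - frag_cmul ((-1) ^ (i + k)) (G k i))"
    unfolding lower upper sum.distrib [symmetric]
    by (intro sum.cong refl sum_atMost_split_at) simp
  also have "\<dots> = - (\<Sum>k\<le>Suc q. frag_cmul ((-1) ^ k) (prism_chain q (d \<circ> face_index k)))"
    by (simp only: sum_negf)
      (simp add: prism_chain_def G_def frag_cmul_sum power_add mult.commute
        sum.swap [where A = "{..q}"] del: sum.atMost_Suc)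
  finally show ?thesis .
qed

lemma chain_boundary_prism_chain_Suc:
  "chain_boundary (Suc (Suc q)) (prism_chain (Suc q) d) =
     frag_of (oriented_simplex (Suc q) (\<lambda>j. cylinder_vertex 1 (d j)))
   - frag_of (oriented_simplex (Suc q) (\<lambda>j. cylinder_vertex 0 (d j)))
   - (\<Sum>k\<le>Suc q. frag_cmul ((-1) ^ k) (prism_chain q (d \<circ> face_index k)))"
proof -
  define c where "c i k = frag_cmul ((-1) ^ (i + k))
                   (frag_of (oriented_simplex (Suc q) (prism_vertex d i \<circ> face_index k)))" for i k
  have "chain_boundary (Suc (Suc q)) (prism_chain (Suc q) d) = (\<Sum>i\<le>Suc q. \<Sum>k\<le>Suc (Suc q). c i k)"
    by (simp add: prism_chain_def chain_boundary_sum chain_boundary_cmul chain_boundary_of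
        singular_face_oriented_simplex_Suc frag_cmul_sum c_def power_add
        del: sum.atMost_Suc)
  also have "\<dots> = (\<Sum>i\<le>Suc q. (\<Sum>k<i. c i k) + (c i i + c i (Suc i))
                    + (\<Sum>k\<in>{Suc (Suc i)..Suc (Suc q)}. c i k))"
    by (intro sum.cong refl sum_atMost_Suc_split_around) simp
  also have "\<dots> = (\<Sum>i\<le>Suc q. c i i + c i (Suc i)) +
      ((\<Sum>i\<le>Suc q. \<Sum>k<i. c i k) + (\<Sum>i\<le>Suc q. \<Sum>k\<in>{Suc (Suc i)..Suc (Suc q)}. c i k))"
    by (simp only: sum.distrib) (simp add: algebra_simps)
  finally show ?thesis
    unfolding sum_prism_faces_off_diagonal [of q d, folded c_def]
    using sum_prism_faces_diagonal [of "Suc q" d] by (simp add: c_def)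
qed

text \<open>The affine map of standard simplices sending vertex \<open>j\<close> to vertex \<open>c j\<close>.\<close>

definition vertex_push :: "nat \<Rightarrow> (nat \<Rightarrow> nat) \<Rightarrow> (nat \<Rightarrow> real) \<Rightarrow> nat \<Rightarrow> real" where
  "vertex_push p c x = (\<lambda>a. \<Sum>j\<le>p. if c j = a then x j else 0)"

lemma oriented_simplex_cylinder_vertex:
  assumes "x \<in> standard_simplex p"
  shows "oriented_simplex p (\<lambda>j. cylinder_vertex (t j) (c j)) x =
         cylinder_point (\<Sum>j\<le>p. t j * x j) (vertex_push p c x)"
proof -
  have "(\<Sum>j\<le>p. cylinder_vertex (t j) (c j) n * x j) =
        cylinder_point (\<Sum>j\<le>p. t j * x j) (vertex_push p c x) n" for n
    by (cases n)
      (auto simp: cylinder_vertex_def cylinder_point_def vertex_push_def intro!: sum.cong)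
  then show ?thesis
    using assms by (simp add: oriented_simplex_def fun_eq_iff)
qed

lemma prism_vertex_cylinder_vertex:
  "prism_vertex d i =
     (\<lambda>j. cylinder_vertex (if j \<le> i then 0 else 1) (d (if j \<le> i then j else j - 1)))"
  by (auto simp: fun_eq_iff prism_vertex_def)

lemma vertex_push_in_standard_simplex:
  assumes x: "x \<in> standard_simplex p" and c: "\<And>j. j \<le> p \<Longrightarrow> c j \<le> q"
  shows "vertex_push p c x \<in> standard_simplex q"
proof -
  have x01: "0 \<le> x j" "x j \<le> 1" and "(\<Sum>j\<le>p. x j) = 1" for j
    using x by (auto simp: standard_simplex_def)
  have le: "(\<Sum>j\<le>p. if c j = a then x j else 0) \<le> (\<Sum>j\<le>p. x j)" for a
    by (intro sum_mono) (simp add: x01)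
  have "(\<Sum>a\<le>q. \<Sum>j\<le>p. if c j = a then x j else 0) = (\<Sum>j\<le>p. \<Sum>a\<le>q. if c j = a then x j else 0)"
    by (rule sum.swap)
  also have "\<dots> = (\<Sum>j\<le>p. x j)"
    using c by (intro sum.cong) (auto simp: sum.delta)
  moreover have "(\<Sum>j\<le>p. if c j = a then x j else 0) = 0" if "q < a" for a
    using c that by (intro sum.neutral) force
  ultimately show ?thesis
    using le x by (auto simp: standard_simplex_def vertex_push_def x01 sum_nonneg)
qed

lemma simplical_face_vertex_push:
  "simplical_face k (vertex_push p c x) = vertex_push p (face_index k \<circ> c) x"
proof -
  have "face_index k l = a \<longleftrightarrow> (if a < k then l = a else a \<noteq> k \<and> l = a - 1)" for l a
    by (auto simp: face_index_def)
  then show ?thesis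
    by (auto simp: fun_eq_iff simplical_face_def vertex_push_def)
qed

lemma vertex_push_id:
  assumes "x \<in> standard_simplex p"
  shows "vertex_push p (\<lambda>j. j) x = x"
  using assms by (auto simp: fun_eq_iff vertex_push_def standard_simplex_def)

definition cylinder :: "nat \<Rightarrow> (nat \<Rightarrow> real) set" where
  "cylinder q = {z. z 0 \<in> {0..1} \<and> z \<circ> Suc \<in> standard_simplex q}"

abbreviation cylinder_map ::
  "('a \<times> real \<Rightarrow> 'b) \<Rightarrow> ((nat \<Rightarrow> real) \<Rightarrow> 'a) \<Rightarrow> (nat \<Rightarrow> real) \<Rightarrow> 'b" where
  "cylinder_map h m \<equiv> \<lambda>z. h (m (z \<circ> Suc), z 0)"

lemma oriented_simplex_prism_vertex:
  assumes "x \<in> standard_simplex p"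
  shows "oriented_simplex p (prism_vertex d i) x =
         cylinder_point (\<Sum>j\<le>p. if j \<le> i then 0 else x j)
           (vertex_push p (\<lambda>j. d (if j \<le> i then j else j - 1)) x)"
  using oriented_simplex_cylinder_vertex [OF assms]
  by (simp add: prism_vertex_cylinder_vertex if_distrib [of "\<lambda>u. u * _"] cong: if_cong)

lemma simplicial_simplex_prism_vertex:
  assumes "i \<le> q"
  shows "simplicial_simplex (Suc q) (cylinder q) (prism_simplex q i)"
proof -
  have "prism_simplex q i x \<in> cylinder q"
    if x: "x \<in> standard_simplex (Suc q)" for x
  proof -
    have "(\<Sum>j\<le>Suc q. if j \<le> i then 0 else x j) \<le> (\<Sum>j\<le>Suc q. x j)"
      using x by (intro sum_mono) (simp add: standard_simplex_def)
    then have "(\<Sum>j\<le>Suc q. if j \<le> i then 0 else x j) \<in> {0..1}"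
      using x by (simp add: standard_simplex_def sum_nonneg)
    moreover have "vertex_push (Suc q) (\<lambda>j. if j \<le> i then j else j - 1) x \<in> standard_simplex q"
      using assms by (intro vertex_push_in_standard_simplex [OF x]) auto
    ultimately show ?thesis
      by (simp add: oriented_simplex_prism_vertex [OF x] cylinder_def)
  qed
  then show ?thesis
    by (auto simp: simplicial_simplex)
qed

lemma continuous_map_cylinder:
  assumes h: "continuous_map (prod_topology X (top_of_set {0..1::real})) Y h"
    and m: "singular_simplex q X m"
  shows "continuous_map (subtopology (powertop_real UNIV) (cylinder q)) Y (cylinder_map h m)"
proof -
  let ?C = "subtopology (powertop_real UNIV) (cylinder q)"
  have time: "continuous_map ?C (top_of_set {0..1}) (\<lambda>z. z 0)"
    unfolding continuous_map_in_subtopology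
    by (auto simp: cylinder_def
        intro: continuous_map_product_projection continuous_map_from_subtopology)
  have "continuous_map (powertop_real UNIV) (powertop_real UNIV) (\<lambda>z. z \<circ> Suc)"
    by (auto simp: o_def intro: continuous_map_product_projection)
  then have "continuous_map ?C (subtopology (powertop_real UNIV) (standard_simplex q))
               (\<lambda>z. z \<circ> Suc)"
    unfolding continuous_map_in_subtopology
    by (auto simp: cylinder_def intro: continuous_map_from_subtopology)
  then have base: "continuous_map ?C X (\<lambda>z. m (z \<circ> Suc))"
    using m continuous_map_compose [unfolded o_def] unfolding singular_simplex_def by blast
  show ?thesis
    using continuous_map_compose [OF continuous_map_pairedI [OF base time] h]
    by (simp add: o_def)
qed

definition simplex_prism :: "('a \<times> real \<Rightarrow> 'b) \<Rightarrow> nat \<Rightarrow> ((nat \<Rightarrow> real) \<Rightarrow> 'a) \<Rightarrow> 'b chain" where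
  "simplex_prism h q m = chain_map (Suc q) (cylinder_map h m) (prism_chain q (\<lambda>j. j))"

definition chain_prism :: "('a \<times> real \<Rightarrow> 'b) \<Rightarrow> nat \<Rightarrow> 'a chain \<Rightarrow> 'b chain" where
  "chain_prism h q = frag_extend (simplex_prism h q)"

lemma singular_chain_chain_prism:
  assumes h: "continuous_map (prod_topology X (top_of_set {0..1::real})) Y h"
    and c: "singular_chain q X c"
  shows "singular_chain (Suc q) Y (chain_prism h q c)"
  unfolding chain_prism_def
proof (rule singular_chain_extend)
  fix m assume "m \<in> Poly_Mapping.keys c"
  then have m: "singular_simplex q X m"
    using c by (auto simp: singular_chain_def)
  have "simplicial_chain (Suc q) (cylinder q) (prism_chain q (\<lambda>j. j))"
    unfolding prism_chain_def
    by (intro simplicial_chain_sum simplicial_chain_cmul)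
      (simp add: simplicial_simplex_prism_vertex)
  then have "singular_chain (Suc q) (subtopology (powertop_real UNIV) (cylinder q))
               (prism_chain q (\<lambda>j. j))"
    by (rule simplicial_imp_singular_chain)
  then show "singular_chain (Suc q) Y (simplex_prism h q m)"
    unfolding simplex_prism_def
    by (rule singular_chain_chain_map [OF _ continuous_map_cylinder [OF h m]])
qed

lemma keys_chain_prism:
  "Poly_Mapping.keys (chain_prism h q c) \<subseteq>
     (\<Union>m \<in> Poly_Mapping.keys c. \<Union>i\<le>q.
        {simplex_map (Suc q) (cylinder_map h m) (prism_simplex q i)})"
proof -
  let ?\<tau> = "\<lambda>m i. simplex_map (Suc q) (cylinder_map h m)
                (prism_simplex q i)"
  have "simplex_prism h q m = (\<Sum>i\<le>q. frag_cmul ((-1) ^ i) (frag_of (?\<tau> m i)))" for m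
    by (simp add: simplex_prism_def prism_chain_def chain_map_sum o_def)
  then have "Poly_Mapping.keys (simplex_prism h q m) \<subseteq> (\<Union>i\<le>q. {?\<tau> m i})" for m
    using keys_sum [of "\<lambda>i. frag_cmul ((-1) ^ i) (frag_of (?\<tau> m i))" "{..q}"]
    by (force simp: keys_frag_of)
  then show ?thesis
    unfolding chain_prism_def using keys_frag_extend by fastforce
qed

lemma simplex_map_cylinder_end:
  "simplex_map q (cylinder_map h m) (oriented_simplex q (cylinder_vertex t)) =
   simplex_map q (\<lambda>x. h (x, t)) m"
  unfolding simplex_map_def
proof (rule restrict_ext)
  fix x assume x: "x \<in> standard_simplex q"
  then have "(\<Sum>j\<le>q. t * x j) = t"
    by (simp add: standard_simplex_def flip: sum_distrib_left)
  then show "(cylinder_map h m \<circ> oriented_simplex q (cylinder_vertex t)) x =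
             ((\<lambda>x. h (x, t)) \<circ> m) x"
    using oriented_simplex_cylinder_vertex [OF x, of "\<lambda>j. t" "\<lambda>j. j"]
    by (simp add: vertex_push_id [OF x])
qed

lemma chain_map_prism_chain_face:
  "chain_map (Suc q) (cylinder_map h m) (prism_chain q (face_index k)) =
   simplex_prism h q (singular_face (Suc q) k m)"
proof -
  have "simplex_map (Suc q) (cylinder_map h m)
          (oriented_simplex (Suc q) (prism_vertex (face_index k) i)) =
        simplex_map (Suc q) (cylinder_map h (singular_face (Suc q) k m)) (prism_simplex q i)"
    if i: "i \<le> q" for i
    unfolding simplex_map_def
  proof (rule restrict_ext)
    fix x assume x: "x \<in> standard_simplex (Suc q)"
    define c where "c j = (if j \<le> i then j else j - 1)" for j
    define t where "t = (\<Sum>j\<le>Suc q. if j \<le> i then 0 else x j)"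
    have "vertex_push (Suc q) c x \<in> standard_simplex q"
      using i by (intro vertex_push_in_standard_simplex [OF x]) (auto simp: c_def)
    then have "singular_face (Suc q) k m (vertex_push (Suc q) c x) =
               m (vertex_push (Suc q) (face_index k \<circ> c) x)"
      by (simp add: singular_face_def simplical_face_vertex_push)
    moreover have "oriented_simplex (Suc q) (prism_vertex d i) x =
                   cylinder_point t (vertex_push (Suc q) (d \<circ> c) x)" for d
      using oriented_simplex_prism_vertex [OF x] by (simp add: c_def t_def o_def)
    ultimately show
      "(cylinder_map h m \<circ> oriented_simplex (Suc q) (prism_vertex (face_index k) i)) x =
       (cylinder_map h (singular_face (Suc q) k m) \<circ> prism_simplex q i) x"
      by (simp add: o_def)
  qed
  then show ?thesis
    unfolding simplex_prism_def prism_chain_def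
    by (simp add: chain_map_sum)
qed

lemma singular_chain_prism_chain: "singular_chain (Suc q) (powertop_real UNIV) (prism_chain q d)"
proof -
  have "simplicial_chain (Suc q) UNIV (prism_chain q d)"
    unfolding prism_chain_def
    by (intro simplicial_chain_sum simplicial_chain_cmul)
      (simp add: simplicial_simplex_oriented_simplex)
  then show ?thesis
    using simplicial_imp_singular_chain by fastforce
qed

lemma chain_boundary_simplex_prism:
  "chain_boundary (Suc q) (simplex_prism h q m) =
     frag_of (simplex_map q (\<lambda>x. h (x, 1)) m) - frag_of (simplex_map q (\<lambda>x. h (x, 0)) m)
   - chain_prism h (q - 1) (chain_boundary q (frag_of m))"
proof -
  have boundary: "chain_boundary (Suc q) (simplex_prism h q m) =
        chain_map q (cylinder_map h m) (chain_boundary (Suc q) (prism_chain q (\<lambda>j. j)))"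
    unfolding simplex_prism_def using chain_boundary_chain_map [OF singular_chain_prism_chain]
    by simp
  show ?thesis
  proof (cases q)
    case 0
    have "chain_boundary 0 (frag_of m) = 0"
      by (simp add: chain_boundary_of)
    then show ?thesis
      using boundary chain_boundary_prism_chain_0 [of "\<lambda>j. j"]
      by (simp add: 0 chain_map_diff simplex_map_cylinder_end chain_prism_def)
  next
    case (Suc q')
    have "chain_map q (cylinder_map h m)
            (\<Sum>k\<le>q. frag_cmul ((-1) ^ k) (prism_chain q' (face_index k))) =
          chain_prism h q' (chain_boundary q (frag_of m))"
      by (simp add: Suc chain_map_sum chain_boundary_of chain_prism_def frag_extend_sum
          frag_extend_cmul chain_map_prism_chain_face del: sum.atMost_Suc)
    then show ?thesis
      using boundary chain_boundary_prism_chain_Suc [of q' "\<lambda>j. j"]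
      by (simp add: Suc chain_map_diff simplex_map_cylinder_end comp_def [of "\<lambda>j. j"]
          del: sum.atMost_Suc)
  qed
qed

lemma chain_boundary_chain_prism:
  "chain_boundary (Suc q) (chain_prism h q c) =
     chain_map q (\<lambda>x. h (x, 1)) c - chain_map q (\<lambda>x. h (x, 0)) c
   - chain_prism h (q - 1) (chain_boundary q c)"
proof (induction c rule: frag_induction [OF subset_UNIV])
  case (3 a b)
  then show ?case
    by (simp add: chain_prism_def frag_extend_diff chain_boundary_diff chain_map_diff)
qed (simp_all add: chain_prism_def chain_boundary_simplex_prism)

lemma chain_prism_0 [simp]: "chain_prism h q 0 = 0"
  by (simp add: chain_prism_def)

section \<open>Allowable chains\<close>

definition preimage_in_skeleton :: "'a set \<Rightarrow> nat \<Rightarrow> int \<Rightarrow> ((nat \<Rightarrow> real) \<Rightarrow> 'a) \<Rightarrow> bool" where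
  "preimage_in_skeleton \<Sigma> i j \<sigma> \<longleftrightarrow>
     (\<forall>x \<in> standard_simplex i. \<sigma> x \<in> \<Sigma> \<longrightarrow> x \<in> simplex_skeleton i j)"

lemma standard_simplex_in_top_skeleton:
  "x \<in> standard_simplex i \<Longrightarrow> x \<in> simplex_skeleton i (int i)"
proof -
  assume "x \<in> standard_simplex i"
  moreover have "card {l. l \<le> i \<and> x l \<noteq> 0} \<le> card {..i}"
    by (rule card_mono) auto
  ultimately show ?thesis
    by (simp add: simplex_skeleton_def)
qed

text \<open>The strata of \<open>\<Sigma>\<close> are its components, so allowability only depends on
  \<open>\<sigma>\<^sup>-\<^sup>1(\<Sigma>)\<close>; the perversity condition makes the regular strata impose nothing.\<close>

lemma allowable_simplex_iff_preimage_in_skeleton: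
  assumes p: "perversity p" and \<sigma>: "singular_simplex i X \<sigma>"
  shows "allowable_simplex X \<Sigma> k p i \<sigma> \<longleftrightarrow> preimage_in_skeleton \<Sigma> i (int i - int k + p k) \<sigma>"
proof -
  have top: "\<sigma> x \<in> topspace X" if "x \<in> standard_simplex i" for x
    using \<sigma> that by (auto simp: singular_simplex_def continuous_map_def)
  have stratum: "\<sigma> x \<in> \<Sigma> \<longleftrightarrow> (\<exists>Z \<in> connected_components_of (subtopology X \<Sigma>). \<sigma> x \<in> Z)"
    if "x \<in> standard_simplex i" for x
    using top [OF that] Union_connected_components_of [of "subtopology X \<Sigma>"] by auto
  show ?thesis
  proof
    assume allowable: "allowable_simplex X \<Sigma> k p i \<sigma>"
    show "preimage_in_skeleton \<Sigma> i (int i - int k + p k) \<sigma>"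
      unfolding preimage_in_skeleton_def
    proof (intro ballI impI)
      fix x assume x: "x \<in> standard_simplex i" and "\<sigma> x \<in> \<Sigma>"
      then obtain Z where Z: "Z \<in> connected_components_of (subtopology X \<Sigma>)" "\<sigma> x \<in> Z"
        using stratum by blast
      then have "(Z, k) \<in> strata X \<Sigma> k"
        by (simp add: strata_def)
      then show "x \<in> simplex_skeleton i (int i - int k + p k)"
        using allowable x Z(2) unfolding allowable_simplex_def by fastforce
    qed
  next
    assume skel: "preimage_in_skeleton \<Sigma> i (int i - int k + p k) \<sigma>"
    have "{x \<in> standard_simplex i. \<sigma> x \<in> Z} \<subseteq> simplex_skeleton i (int i - int c + p c)"
      if "(Z, c) \<in> strata X \<Sigma> k" for Z c
    proof (cases "c = 0")
      case True
      then show ?thesis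
        using p standard_simplex_in_top_skeleton by (auto simp: perversity_def)
    next
      case False
      with that have "c = k" "Z \<in> connected_components_of (subtopology X \<Sigma>)"
        by (auto simp: strata_def)
      then show ?thesis
        using skel stratum by (auto simp: preimage_in_skeleton_def)
    qed
    then show "allowable_simplex X \<Sigma> k p i \<sigma>"
      by (auto simp: allowable_simplex_def)
  qed
qed

lemma allowable_chain_iff_preimage_in_skeleton:
  assumes "perversity p" and "singular_chain i X c"
  shows "allowable_chain X \<Sigma> k p i c \<longleftrightarrow>
         (\<forall>\<sigma> \<in> Poly_Mapping.keys c. preimage_in_skeleton \<Sigma> i (int i - int k + p k) \<sigma>)"
  using assms allowable_simplex_iff_preimage_in_skeleton
  by (fastforce simp: allowable_chain_def singular_chain_def)

lemma stratified_map_preimage: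
  "stratified_map X \<Sigma>X Y \<Sigma>Y f \<Longrightarrow> x \<in> topspace X \<Longrightarrow> f x \<in> \<Sigma>Y \<longleftrightarrow> x \<in> \<Sigma>X"
  by (auto simp: stratified_map_def)

lemma preimage_in_skeleton_simplex_map:
  assumes f: "stratified_map X \<Sigma>X Y \<Sigma>Y f" and \<sigma>: "singular_simplex i X \<sigma>"
    and "preimage_in_skeleton \<Sigma>X i j \<sigma>"
  shows "preimage_in_skeleton \<Sigma>Y i j (simplex_map i f \<sigma>)"
  using assms stratified_map_preimage [OF f]
  by (auto simp: preimage_in_skeleton_def simplex_map_def singular_simplex_def continuous_map_def)

lemma card_le_card_image_Suc:
  assumes "finite A" and "inj_on c (A - {a})"
  shows "card A \<le> card (c ` A) + 1"
proof -
  have "card A \<le> card (A - {a}) + 1"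
    using assms(1) by (cases "a \<in> A") (auto simp: card_Diff_singleton_if)
  also have "card (A - {a}) = card (c ` (A - {a}))"
    using assms(2) by (simp add: card_image)
  also have "\<dots> \<le> card (c ` A)"
    using assms(1) by (intro card_mono) auto
  finally show ?thesis by simp
qed

lemma card_support_vertex_push:
  assumes y: "y \<in> standard_simplex p" and c: "\<And>l. l \<le> p \<Longrightarrow> c l \<le> q"
    and inj: "inj_on c ({..p} - {a})"
  shows "card {l. l \<le> p \<and> y l \<noteq> 0} \<le> card {b. b \<le> q \<and> vertex_push p c y b \<noteq> 0} + 1"
proof -
  let ?A = "{l. l \<le> p \<and> y l \<noteq> 0}"
  have "c ` ?A \<subseteq> {b. b \<le> q \<and> vertex_push p c y b \<noteq> 0}"
  proof clarify
    fix l assume l: "l \<le> p" "y l \<noteq> 0"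
    have "(if c l = c l then y l else 0) \<le> (\<Sum>j\<le>p. if c j = c l then y j else 0)"
      using y l by (intro member_le_sum) (auto simp: standard_simplex_def)
    moreover have "0 < y l"
      using y l by (auto simp: standard_simplex_def order_le_less)
    ultimately show "c l \<le> q \<and> vertex_push p c y (c l) \<noteq> 0"
      using l c by (auto simp: vertex_push_def)
  qed
  then have "card (c ` ?A) \<le> card {b. b \<le> q \<and> vertex_push p c y b \<noteq> 0}"
    by (intro card_mono) auto
  moreover have "card ?A \<le> card (c ` ?A) + 1"
    using inj by (intro card_le_card_image_Suc) (auto intro: inj_on_subset)
  ultimately show ?thesis
    by linarith
qed

text \<open>A prism simplex projects to the base collapsing only the edge between its vertices
  \<open>i\<close> and \<open>i + 1\<close>, so supports shrink by at most one vertex.\<close>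

lemma preimage_in_skeleton_prism_simplex:
  assumes h: "stratified_map (prod_topology X (top_of_set {0..1::real})) (\<Sigma> \<times> {0..1}) Y \<Sigma>Y h"
    and m: "singular_simplex q X m" and skel: "preimage_in_skeleton \<Sigma> q j m" and i: "i \<le> q"
  shows "preimage_in_skeleton \<Sigma>Y (Suc q) (j + 1)
           (simplex_map (Suc q) (cylinder_map h m) (prism_simplex q i))"
  unfolding preimage_in_skeleton_def
proof (intro ballI impI)
  fix y assume y: "y \<in> standard_simplex (Suc q)"
    and "simplex_map (Suc q) (cylinder_map h m) (prism_simplex q i) y \<in> \<Sigma>Y"
  define c where "c = (\<lambda>l. if l \<le> i then l else l - 1)"
  define z where "z = prism_simplex q i y"
  have z: "z \<in> cylinder q"
    using simplicial_simplex_prism_vertex [OF i] y by (auto simp: z_def simplicial_simplex)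
  then have "m (z \<circ> Suc) \<in> topspace X"
    using m by (auto simp: cylinder_def singular_simplex_def continuous_map_def)
  moreover have "h (m (z \<circ> Suc), z 0) \<in> \<Sigma>Y"
    using \<open>simplex_map _ _ _ y \<in> \<Sigma>Y\<close> y by (simp add: simplex_map_def z_def)
  ultimately have "m (z \<circ> Suc) \<in> \<Sigma>"
    using stratified_map_preimage [OF h] z by (auto simp: cylinder_def)
  then have "int (card {l. l \<le> q \<and> (z \<circ> Suc) l \<noteq> 0}) \<le> j + 1"
    using skel z by (auto simp: preimage_in_skeleton_def cylinder_def simplex_skeleton_def)
  moreover have "z \<circ> Suc = vertex_push (Suc q) c y"
    using oriented_simplex_prism_vertex [OF y] by (simp add: z_def c_def)
  moreover have
    "card {l. l \<le> Suc q \<and> y l \<noteq> 0} \<le> card {b. b \<le> q \<and> vertex_push (Suc q) c y b \<noteq> 0} + 1"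
    using i by (intro card_support_vertex_push [OF y, where a = "Suc i"])
      (auto simp: c_def inj_on_def)
  ultimately show "y \<in> simplex_skeleton (Suc q) (j + 1)"
    using y by (simp add: simplex_skeleton_def)
qed

lemma keys_chain_map: "Poly_Mapping.keys (chain_map i f c) \<subseteq> simplex_map i f ` Poly_Mapping.keys c"
  unfolding chain_map_def using keys_frag_extend by (fastforce simp: keys_frag_of)

lemma allowable_chain_chain_map:
  assumes p: "perversity p" and f: "stratified_map X \<Sigma>X Y \<Sigma>Y f"
    and c: "singular_chain i X c" "allowable_chain X \<Sigma>X k p i c"
  shows "allowable_chain Y \<Sigma>Y k p i (chain_map i f c)"
proof -
  have "singular_chain i Y (chain_map i f c)"
    using f c(1) by (auto simp: stratified_map_def intro: singular_chain_chain_map)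
  moreover have "\<forall>\<sigma> \<in> Poly_Mapping.keys c. preimage_in_skeleton \<Sigma>X i (int i - int k + p k) \<sigma>"
    using c allowable_chain_iff_preimage_in_skeleton [OF p] by blast
  ultimately show ?thesis
    using keys_chain_map [of i f c] c(1) preimage_in_skeleton_simplex_map [OF f]
    by (fastforce simp: allowable_chain_iff_preimage_in_skeleton [OF p] singular_chain_def)
qed

lemma chain_map_IC_set:
  assumes p: "perversity p" and f: "stratified_map X \<Sigma>X Y \<Sigma>Y f" and c: "c \<in> IC_set X \<Sigma>X k p i"
  shows "chain_map i f c \<in> IC_set Y \<Sigma>Y k p i"
proof -
  have s: "singular_chain i X c" and "allowable_chain X \<Sigma>X k p i c"
    and "allowable_chain X \<Sigma>X k p (i - 1) (chain_boundary i c)"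
    using c by (auto simp: IC_set_def)
  moreover have "chain_boundary i (chain_map i f c) = chain_map (i - 1) f (chain_boundary i c)"
    using chain_boundary_chain_map [OF s] by simp
  moreover have "singular_chain (i - 1) X (chain_boundary i c)"
    using singular_chain_boundary [OF s] by simp
  ultimately show ?thesis
    using f allowable_chain_chain_map [OF p f]
    by (auto simp: IC_set_def stratified_map_def intro: singular_chain_chain_map)
qed

lemma stratified_map_slice:
  assumes h: "stratified_map (prod_topology X (top_of_set {0..1::real})) (\<Sigma> \<times> {0..1}) Y \<Sigma>Y h"
    and t: "t \<in> {0..1}"
  shows "stratified_map X \<Sigma> Y \<Sigma>Y (\<lambda>x. h (x, t))"
proof -
  have "continuous_map X (prod_topology X (top_of_set {0..1::real})) (\<lambda>x. (x, t))"
    using t by (intro continuous_map_pairedI continuous_map_id [unfolded id_def]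
        continuous_map_const [THEN iffD2]) auto
  then have "continuous_map X Y (\<lambda>x. h (x, t))"
    using h continuous_map_compose [unfolded o_def] by (fastforce simp: stratified_map_def)
  moreover have "h (x, t) \<in> \<Sigma>Y \<longleftrightarrow> x \<in> \<Sigma>" if "x \<in> topspace X" for x
    using stratified_map_preimage [OF h, of "(x, t)"] that t by auto
  ultimately show ?thesis
    using h t by (auto simp: stratified_map_def continuous_map_def)
qed

section \<open>Intersection cycles and boundaries\<close>

definition IC_cycles :: "'a topology \<Rightarrow> 'a set \<Rightarrow> nat \<Rightarrow> (nat \<Rightarrow> int) \<Rightarrow> nat \<Rightarrow> 'a chain set" where
  "IC_cycles X \<Sigma> k p i = {c \<in> IC_set X \<Sigma> k p i. chain_boundary i c = 0}"

definition IC_boundaries :: "'a topology \<Rightarrow> 'a set \<Rightarrow> nat \<Rightarrow> (nat \<Rightarrow> int) \<Rightarrow> nat \<Rightarrow> 'a chain set" where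
  "IC_boundaries X \<Sigma> k p i = chain_boundary (Suc i) ` IC_set X \<Sigma> k p (Suc i)"

definition IC_cycle_group ::
  "'a topology \<Rightarrow> 'a set \<Rightarrow> nat \<Rightarrow> (nat \<Rightarrow> int) \<Rightarrow> nat \<Rightarrow> 'a chain monoid" where
  "IC_cycle_group X \<Sigma> k p i = subgroup_generated (chain_group i X) (IC_cycles X \<Sigma> k p i)"

lemma IH_group_eq_FactGroup:
  "IH_group X \<Sigma> k p i = IC_cycle_group X \<Sigma> k p i Mod IC_boundaries X \<Sigma> k p i"
  by (simp add: IH_group_def IC_cycle_group_def IC_cycles_def IC_boundaries_def)

lemma allowable_chain_0 [simp]: "allowable_chain X \<Sigma> k p i 0"
  by (simp add: allowable_chain_def)

lemma allowable_chain_add: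
  "allowable_chain X \<Sigma> k p i a \<Longrightarrow> allowable_chain X \<Sigma> k p i b \<Longrightarrow> allowable_chain X \<Sigma> k p i (a + b)"
  using keys_add [of a b] by (auto simp: allowable_chain_def)

lemma allowable_chain_minus [simp]:
  "allowable_chain X \<Sigma> k p i (- a) \<longleftrightarrow> allowable_chain X \<Sigma> k p i a"
  by (simp add: allowable_chain_def)

lemma IC_set_0 [simp]: "0 \<in> IC_set X \<Sigma> k p i"
  by (simp add: IC_set_def)

lemma IC_set_add:
  "a \<in> IC_set X \<Sigma> k p i \<Longrightarrow> b \<in> IC_set X \<Sigma> k p i \<Longrightarrow> a + b \<in> IC_set X \<Sigma> k p i"
  by (simp add: IC_set_def singular_chain_add chain_boundary_add allowable_chain_add)

lemma IC_set_minus [simp]: "- a \<in> IC_set X \<Sigma> k p i \<longleftrightarrow> a \<in> IC_set X \<Sigma> k p i"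
  by (auto simp: IC_set_def chain_boundary_minus singular_chain_minus)

lemma IC_set_imp_singular_chain: "c \<in> IC_set X \<Sigma> k p i \<Longrightarrow> singular_chain i X c"
  by (simp add: IC_set_def)

lemma IC_set_diff:
  "a \<in> IC_set X \<Sigma> k p i \<Longrightarrow> b \<in> IC_set X \<Sigma> k p i \<Longrightarrow> a - b \<in> IC_set X \<Sigma> k p i"
  using IC_set_add [of a X \<Sigma> k p i "- b"] by simp

lemma subgroup_of_chain_group:
  assumes "S \<subseteq> singular_chain_set i X" "0 \<in> S"
    and "\<And>a b. a \<in> S \<Longrightarrow> b \<in> S \<Longrightarrow> a + b \<in> S" "\<And>a. a \<in> S \<Longrightarrow> - a \<in> S"
  shows "subgroup S (chain_group i X)"
  using assms by (intro group.subgroupI group_chain_group) (auto simp: singular_chain_def)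

lemma subgroup_IC_cycles: "subgroup (IC_cycles X \<Sigma> k p i) (chain_group i X)"
  by (intro subgroup_of_chain_group)
    (auto simp: IC_cycles_def IC_set_add chain_boundary_add chain_boundary_minus
      IC_set_imp_singular_chain)

lemma IC_boundaries_subset_IC_cycles: "IC_boundaries X \<Sigma> k p i \<subseteq> IC_cycles X \<Sigma> k p i"
proof
  fix b assume "b \<in> IC_boundaries X \<Sigma> k p i"
  then obtain w where w: "w \<in> IC_set X \<Sigma> k p (Suc i)" and b: "b = chain_boundary (Suc i) w"
    by (auto simp: IC_boundaries_def)
  then have "singular_chain (Suc i) X w"
    by (simp add: IC_set_def)
  then have "singular_chain i X b" "chain_boundary i b = 0"
    using singular_chain_boundary chain_boundary_boundary b by fastforce+
  then show "b \<in> IC_cycles X \<Sigma> k p i"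
    using w b by (simp add: IC_cycles_def IC_set_def)
qed

lemma subgroup_IC_boundaries: "subgroup (IC_boundaries X \<Sigma> k p i) (chain_group i X)"
proof (rule subgroup_of_chain_group)
  show "IC_boundaries X \<Sigma> k p i \<subseteq> singular_chain_set i X"
    using IC_boundaries_subset_IC_cycles [of X \<Sigma> k p i]
    by (auto simp: IC_cycles_def dest: IC_set_imp_singular_chain)
  show "0 \<in> IC_boundaries X \<Sigma> k p i"
    using IC_set_0 chain_boundary_0 unfolding IC_boundaries_def by (metis image_eqI)
  show "a + b \<in> IC_boundaries X \<Sigma> k p i"
    if "a \<in> IC_boundaries X \<Sigma> k p i" "b \<in> IC_boundaries X \<Sigma> k p i" for a b
    using that IC_set_add unfolding IC_boundaries_def by (force simp flip: chain_boundary_add)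
  show "- a \<in> IC_boundaries X \<Sigma> k p i" if "a \<in> IC_boundaries X \<Sigma> k p i" for a
    using that unfolding IC_boundaries_def by (force simp flip: chain_boundary_minus)
qed

lemma carrier_IC_cycle_group [simp]: "carrier (IC_cycle_group X \<Sigma> k p i) = IC_cycles X \<Sigma> k p i"
  by (simp add: IC_cycle_group_def
      subgroup.carrier_subgroup_generated_subgroup [OF subgroup_IC_cycles])

lemma mult_IC_cycle_group [simp]: "mult (IC_cycle_group X \<Sigma> k p i) = (+)"
  by (simp add: IC_cycle_group_def)

lemma normal_IC_boundaries: "IC_boundaries X \<Sigma> k p i \<lhd> IC_cycle_group X \<Sigma> k p i"
  unfolding IC_cycle_group_def
  by (intro comm_group.subgroup_imp_normal group.abelian_subgroup_generated
      group.subgroup_of_subgroup_generated group_chain_group abelian_chain_group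
      IC_boundaries_subset_IC_cycles subgroup_IC_boundaries)

section \<open>Invariance under stratified homotopy equivalence\<close>

lemma FactGroup_iso_of_inverse_modulo:
  assumes N: "N \<lhd> G" and M: "M \<lhd> H"
    and \<phi>: "\<phi> \<in> hom G H" and \<psi>: "\<psi> \<in> hom H G"
    and \<phi>N: "\<phi> ` N \<subseteq> M" and \<psi>M: "\<psi> ` M \<subseteq> N"
    and \<psi>\<phi>: "\<And>x. x \<in> carrier G \<Longrightarrow> x \<in> N #>\<^bsub>G\<^esub> \<psi> (\<phi> x)"
    and \<phi>\<psi>: "\<And>y. y \<in> carrier H \<Longrightarrow> y \<in> M #>\<^bsub>H\<^esub> \<phi> (\<psi> y)"
  shows "G Mod N \<cong> H Mod M"
proof -
  interpret N: normal N G by (rule N)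
  interpret M: normal M H by (rule M)
  define \<Phi> where "\<Phi> x = M #>\<^bsub>H\<^esub> \<phi> x" for x
  have \<phi>_carrier: "\<phi> x \<in> carrier H" if "x \<in> carrier G" for x
    using \<phi> that by (auto simp: hom_def)
  have \<psi>_carrier: "\<psi> y \<in> carrier G" if "y \<in> carrier H" for y
    using \<psi> that by (auto simp: hom_def)
  have "\<Phi> \<in> hom G (H Mod M)"
    using \<phi> by (auto intro!: homI simp: \<Phi>_def carrier_FactGroup \<phi>_carrier M.rcos_sum hom_mult)
  then interpret \<Phi>: group_hom G "H Mod M" \<Phi>
    by (intro group_hom.intro group_hom_axioms.intro N.is_group M.factorgroup_is_group)
  have "\<Phi> ` carrier G = carrier (H Mod M)"
  proof
    show "\<Phi> ` carrier G \<subseteq> carrier (H Mod M)"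
      by (auto simp: \<Phi>_def carrier_FactGroup \<phi>_carrier)
    show "carrier (H Mod M) \<subseteq> \<Phi> ` carrier G"
    proof
      fix C assume "C \<in> carrier (H Mod M)"
      then obtain y where y: "y \<in> carrier H" "C = M #>\<^bsub>H\<^esub> y"
        by (auto simp: carrier_FactGroup)
      then have "C = \<Phi> (\<psi> y)"
        using M.repr_independence [OF \<phi>\<psi> [OF y(1)] \<phi>_carrier [OF \<psi>_carrier] M.subgroup_axioms]
        by (simp add: \<Phi>_def \<psi>_carrier)
      then show "C \<in> \<Phi> ` carrier G"
        using \<psi>_carrier [OF y(1)] by blast
    qed
  qed
  moreover have "kernel G (H Mod M) \<Phi> = N"
  proof -
    have "\<Phi> x = M \<longleftrightarrow> x \<in> N" if x: "x \<in> carrier G" for x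
    proof
      assume "\<Phi> x = M"
      then have "\<phi> x \<in> M"
        using M.coset_join1 [OF _ \<phi>_carrier [OF x] M.subgroup_axioms] by (simp add: \<Phi>_def)
      then have "N #>\<^bsub>G\<^esub> \<psi> (\<phi> x) = N"
        using \<psi>M by (intro N.coset_join2 \<psi>_carrier \<phi>_carrier x N.subgroup_axioms) auto
      then show "x \<in> N"
        using \<psi>\<phi> [OF x] by simp
    next
      assume "x \<in> N"
      then show "\<Phi> x = M"
        using \<phi>N unfolding \<Phi>_def by (intro M.coset_join2 \<phi>_carrier x M.subgroup_axioms) auto
    qed
    then show ?thesis
      using N.subset by (auto simp: kernel_def)
  qed
  ultimately show ?thesis
    using \<Phi>.FactGroup_iso by simp
qed

lemma allowable_chain_chain_prism:
  assumes p: "perversity p"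
    and h: "stratified_map (prod_topology X (top_of_set {0..1::real})) (\<Sigma> \<times> {0..1}) Y \<Sigma>Y h"
    and z: "singular_chain i X z" "allowable_chain X \<Sigma> k p i z"
  shows "allowable_chain Y \<Sigma>Y k p (Suc i) (chain_prism h i z)"
proof -
  have "preimage_in_skeleton \<Sigma>Y (Suc i) (int i - int k + p k + 1) \<tau>"
    if \<tau>: "\<tau> \<in> Poly_Mapping.keys (chain_prism h i z)" for \<tau>
  proof -
    obtain m j where m: "m \<in> Poly_Mapping.keys z" and j: "j \<le> i"
      and \<tau>_eq: "\<tau> = simplex_map (Suc i) (cylinder_map h m) (prism_simplex i j)"
      using \<tau> keys_chain_prism [of h i z] by blast
    have "singular_simplex i X m"
      using z m by (auto simp: singular_chain_def)
    moreover have "preimage_in_skeleton \<Sigma> i (int i - int k + p k) m"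
      using m z allowable_chain_iff_preimage_in_skeleton [OF p] by blast
    ultimately show ?thesis
      unfolding \<tau>_eq by (rule preimage_in_skeleton_prism_simplex [OF h _ _ j])
  qed
  moreover have "singular_chain (Suc i) Y (chain_prism h i z)"
    using h z by (auto simp: stratified_map_def intro: singular_chain_chain_prism)
  moreover have "int i - int k + p k + 1 = int (Suc i) - int k + p k"
    by simp
  ultimately show ?thesis
    by (simp add: allowable_chain_iff_preimage_in_skeleton [OF p])
qed

lemma stratified_homotopic_imp_IC_boundary:
  assumes p: "perversity p" and hom: "stratified_homotopic X \<Sigma>X Y \<Sigma>Y f g"
    and z: "z \<in> IC_cycles X \<Sigma>X k p i"
  shows "chain_map i g z - chain_map i f z \<in> IC_boundaries Y \<Sigma>Y k p i"
proof -
  obtain h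
    where h: "stratified_map (prod_topology X (top_of_set {0..1::real})) (\<Sigma>X \<times> {0..1}) Y \<Sigma>Y h"
    and ends: "\<And>x. x \<in> topspace X \<Longrightarrow> h (x, 0) = f x \<and> h (x, 1) = g x"
    using hom by (auto simp: stratified_homotopic_def)
  have zs: "singular_chain i X z" and za: "allowable_chain X \<Sigma>X k p i z"
    and z0: "chain_boundary i z = 0"
    using z by (auto simp: IC_cycles_def IC_set_def)
  define w where "w = chain_prism h i z"
  have slices:
    "chain_boundary (Suc i) w = chain_map i (\<lambda>x. h (x, 1)) z - chain_map i (\<lambda>x. h (x, 0)) z"
    by (simp add: w_def chain_boundary_chain_prism z0)
  have "chain_map i (\<lambda>x. h (x, t)) z \<in> IC_set Y \<Sigma>Y k p i" if "t \<in> {0..1}" for t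
    using z chain_map_IC_set [OF p stratified_map_slice [OF h that]] by (simp add: IC_cycles_def)
  then have "chain_boundary (Suc i) w \<in> IC_set Y \<Sigma>Y k p i"
    unfolding slices by (simp add: IC_set_diff)
  moreover have "singular_chain (Suc i) Y w"
    using h zs by (auto simp: w_def stratified_map_def intro: singular_chain_chain_prism)
  ultimately have "w \<in> IC_set Y \<Sigma>Y k p (Suc i)"
    using allowable_chain_chain_prism [OF p h zs za] by (simp add: IC_set_def w_def)
  moreover have "chain_boundary (Suc i) w = chain_map i g z - chain_map i f z"
    using slices ends chain_map_eq [OF zs, of "\<lambda>x. h (x, 1)" g]
      chain_map_eq [OF zs, of "\<lambda>x. h (x, 0)" f]
    by simp
  ultimately show ?thesis
    unfolding IC_boundaries_def by (metis image_eqI)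
qed

lemma chain_map_hom_IC_cycle_group:
  assumes p: "perversity p" and f: "stratified_map X \<Sigma>X Y \<Sigma>Y f"
  shows "chain_map i f \<in> hom (IC_cycle_group X \<Sigma>X k p i) (IC_cycle_group Y \<Sigma>Y k p i)"
proof -
  have "chain_map i f c \<in> IC_cycles Y \<Sigma>Y k p i" if "c \<in> IC_cycles X \<Sigma>X k p i" for c
    using that chain_map_IC_set [OF p f] chain_boundary_chain_map
    by (fastforce simp: IC_cycles_def IC_set_def)
  then show ?thesis
    by (auto intro!: homI simp: chain_map_add)
qed

lemma chain_map_IC_boundaries:
  assumes p: "perversity p" and f: "stratified_map X \<Sigma>X Y \<Sigma>Y f"
  shows "chain_map i f ` IC_boundaries X \<Sigma>X k p i \<subseteq> IC_boundaries Y \<Sigma>Y k p i"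
proof
  fix c assume "c \<in> chain_map i f ` IC_boundaries X \<Sigma>X k p i"
  then obtain w where w: "w \<in> IC_set X \<Sigma>X k p (Suc i)"
    and c: "c = chain_map i f (chain_boundary (Suc i) w)"
    by (auto simp: IC_boundaries_def)
  then have "c = chain_boundary (Suc i) (chain_map (Suc i) f w)"
    using chain_boundary_chain_map [of "Suc i" X w f] by (simp add: IC_set_def)
  then show "c \<in> IC_boundaries Y \<Sigma>Y k p i"
    using chain_map_IC_set [OF p f w] by (simp add: IC_boundaries_def)
qed

lemma IC_cycle_in_coset_of_homotopy_inverse:
  assumes p: "perversity p" and hom: "stratified_homotopic X \<Sigma> X \<Sigma> (g \<circ> f) id"
    and z: "z \<in> IC_cycles X \<Sigma> k p i"
  shows "z \<in> IC_boundaries X \<Sigma> k p i #>\<^bsub>IC_cycle_group X \<Sigma> k p i\<^esub> chain_map i g (chain_map i f z)"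
proof -
  have "singular_chain i X z"
    using z by (simp add: IC_cycles_def IC_set_def)
  then have "z - chain_map i g (chain_map i f z) \<in> IC_boundaries X \<Sigma> k p i"
    using stratified_homotopic_imp_IC_boundary [OF p hom z]
    by (simp add: chain_map_compose chain_map_ident)
  then show ?thesis
    by (force simp: r_coset_def)
qed

theorem IH_group_iso_if_stratified_homotopy_equivalent:
  assumes "stratified_homotopy_equivalent X \<Sigma>X k Y \<Sigma>Y k" and p: "perversity p"
  shows "IH_group X \<Sigma>X k p i \<cong> IH_group Y \<Sigma>Y k p i"
proof -
  obtain f g where f: "stratified_map X \<Sigma>X Y \<Sigma>Y f" and g: "stratified_map Y \<Sigma>Y X \<Sigma>X g"
    and gf: "stratified_homotopic X \<Sigma>X X \<Sigma>X (g \<circ> f) id"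
    and fg: "stratified_homotopic Y \<Sigma>Y Y \<Sigma>Y (f \<circ> g) id"
    using assms(1) by (auto simp: stratified_homotopy_equivalent_def)
  show ?thesis
    unfolding IH_group_eq_FactGroup
    by (rule FactGroup_iso_of_inverse_modulo [OF normal_IC_boundaries normal_IC_boundaries
          chain_map_hom_IC_cycle_group [OF p f] chain_map_hom_IC_cycle_group [OF p g]
          chain_map_IC_boundaries [OF p f] chain_map_IC_boundaries [OF p g]])
      (simp_all add: IC_cycle_in_coset_of_homotopy_inverse [OF p gf]
        IC_cycle_in_coset_of_homotopy_inverse [OF p fg])
qed

section \<open>Elementary collapses\<close>

definition supp :: "('v \<Rightarrow> real) \<Rightarrow> 'v set" where
  "supp x = {v. x v \<noteq> 0}"

lemma realization_iff:
  "x \<in> realization K \<longleftrightarrow> (\<forall>v. 0 \<le> x v) \<and> supp x \<in> K \<and> sum x (supp x) = 1"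
  by (simp add: realization_def supp_def)

lemma topspace_realization_top [simp]: "topspace (realization_top K) = realization K"
  by (simp add: realization_top_def)

lemma realization_mono: "L \<subseteq> K \<Longrightarrow> realization L \<subseteq> realization K"
  by (auto simp: realization_iff)

definition collapse_direction :: "'v set \<Rightarrow> 'v set \<Rightarrow> 'v \<Rightarrow> real" where
  "collapse_direction s p v =
     (if v \<in> s then 1 else if v \<in> p then - (real (card s) / real (card (p - s))) else 0)"

text \<open>The push moves \<open>x\<close> away from the free face \<open>s\<close> across \<open>p\<close> in a direction of total
  weight zero. The factor \<open>Min (x ` s)\<close> vanishes off the open star of \<open>s\<close>, so the push
  is continuous and fixes \<open>|K - {s, p}|\<close>; at \<open>t = 1\<close> some vertex of \<open>s\<close> loses all its
  weight.\<close>

definition collapse_push :: "'v set \<Rightarrow> 'v set \<Rightarrow> real \<Rightarrow> ('v \<Rightarrow> real) \<Rightarrow> 'v \<Rightarrow> real" where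
  "collapse_push s p t x = (\<lambda>v. x v - t * Min (x ` s) * collapse_direction s p v)"

lemma sum_collapse_push:
  assumes "s \<subset> p" "finite p"
  shows "sum (collapse_push s p t x) p = sum x p"
proof -
  have "sum (collapse_direction s p) p =
        sum (collapse_direction s p) s + sum (collapse_direction s p) (p - s)"
    using assms by (metis Diff_partition psubset_imp_subset sum.subset_diff add.commute)
  also have "\<dots> = 0"
    using assms by (simp add: collapse_direction_def finite_subset [of s p])
  finally show ?thesis
    by (simp add: collapse_push_def sum_subtractf flip: sum_distrib_left)
qed

locale elementary_collapse =
  fixes K :: "'v set set" and s p :: "'v set"
  assumes complex: "simplicial_complex K" and free: "free_in K s p"
begin

lemma face_of_p_in_K: "u \<subseteq> p \<Longrightarrow> u \<noteq> {} \<Longrightarrow> u \<in> K"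
  using complex free by (auto simp: simplicial_complex_def free_in_def principal_def)

lemma free_face_facts:
  "s \<in> K" "s \<subset> p" "finite p" "finite s" "s \<noteq> {}" "p - s \<noteq> {}"
  using complex free by (auto simp: simplicial_complex_def free_in_def principal_def)

lemma supp_star_cases:
  assumes "x \<in> realization K" and "s \<subseteq> supp x"
  shows "supp x = s \<or> supp x = p"
  using assms free by (auto simp: realization_iff free_in_def)

lemma Min_eq_0_outside_star:
  assumes x: "x \<in> realization K" and s: "\<not> s \<subseteq> supp x"
  shows "Min (x ` s) = 0"
proof -
  obtain v where "v \<in> s" "x v = 0"
    using s by (auto simp: supp_def)
  then have "Min (x ` s) \<le> 0"
    using free_face_facts by (metis Min_le finite_imageI image_eqI)
  moreover have "0 \<le> Min (x ` s)"
    using x free_face_facts by (auto simp: realization_iff)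
  ultimately show ?thesis by simp
qed

lemma collapse_push_outside_star:
  "x \<in> realization K \<Longrightarrow> \<not> s \<subseteq> supp x \<Longrightarrow> collapse_push s p t x = x"
  by (simp add: collapse_push_def Min_eq_0_outside_star)

lemma collapse_push_in_star:
  assumes x: "x \<in> realization K" and sx: "s \<subseteq> supp x" and t: "0 < t" "t \<le> 1"
  shows "collapse_push s p t x \<in> realization K"
    and "p - s \<subseteq> supp (collapse_push s p t x)" "supp (collapse_push s p t x) \<subseteq> p"
    and "t = 1 \<Longrightarrow> \<not> s \<subseteq> supp (collapse_push s p t x)"
proof -
  define m where "m = Min (x ` s)"
  define c where "c = real (card s) / real (card (p - s))"
  have "0 < x v" if "v \<in> s" for v
    using x sx that by (auto simp: realization_iff supp_def less_le)
  moreover have "m \<in> x ` s"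
    unfolding m_def using free_face_facts by (intro Min_in) auto
  ultimately have m: "0 < m" "\<exists>v \<in> s. x v = m"
    by auto
  have m_le: "m \<le> x v" if "v \<in> s" for v
    using free_face_facts that by (simp add: m_def)
  have "0 < c"
    using free_face_facts by (simp add: c_def card_gt_0_iff)
  have x_outside: "x v = 0" if "v \<notin> p" for v
    using supp_star_cases [OF x sx] free_face_facts that by (auto simp: supp_def)
  have x_nonneg: "0 \<le> x v" for v
    using x by (simp add: realization_iff)
  have coords: "collapse_push s p t x v =
      (if v \<in> s then x v - t * m else if v \<in> p then x v + t * m * c else 0)" for v
    using x_outside [of v] by (simp add: collapse_push_def collapse_direction_def m_def c_def)
  have "t * m \<le> m" "0 < t * m * c"
    using t m(1) \<open>0 < c\<close> by (simp_all add: mult_le_cancel_right1)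
  then have nonneg: "0 \<le> collapse_push s p t x v" for v
    using coords [of v] m_le [of v] x_nonneg [of v] by auto
  show supp_lower: "p - s \<subseteq> supp (collapse_push s p t x)"
  proof
    fix v assume "v \<in> p - s"
    then show "v \<in> supp (collapse_push s p t x)"
      using coords [of v] \<open>0 < t * m * c\<close> x_nonneg [of v] by (simp add: supp_def)
  qed
  show supp_upper: "supp (collapse_push s p t x) \<subseteq> p"
    using coords free_face_facts by (auto simp: supp_def)
  show "\<not> s \<subseteq> supp (collapse_push s p t x)" if "t = 1"
    using m(2) coords that by (force simp: supp_def)
  have "sum (collapse_push s p t x) (supp (collapse_push s p t x)) = sum (collapse_push s p t x) p"
    using supp_upper free_face_facts by (intro sum.mono_neutral_left) (auto simp: supp_def)
  also have "\<dots> = sum x p"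
    using free_face_facts by (intro sum_collapse_push)
  also have "sum x p = sum x (supp x)"
    using x_outside free_face_facts by (intro sum.mono_neutral_right) (auto simp: supp_def)
  finally have "sum (collapse_push s p t x) (supp (collapse_push s p t x)) = 1"
    using x by (simp add: realization_iff)
  moreover have "supp (collapse_push s p t x) \<in> K"
    using supp_lower supp_upper free_face_facts by (intro face_of_p_in_K) auto
  ultimately show "collapse_push s p t x \<in> realization K"
    using nonneg by (simp add: realization_iff)
qed

end

text \<open>The faces of \<open>p\<close> listed here are the supports of the points moved by the push.\<close>

definition collapse_respects :: "'v set set \<Rightarrow> 'v set \<Rightarrow> 'v set \<Rightarrow> bool" where
  "collapse_respects S s p \<longleftrightarrow> (\<forall>u. (u = s \<or> p - s \<subseteq> u) \<and> u \<subseteq> p \<longrightarrow> (u \<in> S \<longleftrightarrow> p \<in> S))"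

context elementary_collapse
begin

lemma collapse_push_in_realization:
  assumes "x \<in> realization K" and "t \<in> {0..1}"
  shows "collapse_push s p t x \<in> realization K"
proof (cases "t = 0 \<or> \<not> s \<subseteq> supp x")
  case True
  then have "collapse_push s p t x = x"
    using collapse_push_outside_star [OF assms(1)] by (auto simp: collapse_push_def)
  then show ?thesis
    using assms(1) by simp
next
  case False
  then show ?thesis
    using assms collapse_push_in_star(1) by auto
qed

lemma realization_collapse_push_iff:
  assumes S: "S \<subseteq> K" "collapse_respects S s p" and x: "x \<in> realization K" and t: "t \<in> {0..1}"
  shows "collapse_push s p t x \<in> realization S \<longleftrightarrow> x \<in> realization S"
proof (cases "t = 0 \<or> \<not> s \<subseteq> supp x")
  case True
  then have "collapse_push s p t x = x"
    using collapse_push_outside_star [OF x] by (auto simp: collapse_push_def)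
  then show ?thesis
    by simp
next
  case False
  then have sx: "s \<subseteq> supp x" and t0: "0 < t" "t \<le> 1"
    using t by auto
  have in_S: "y \<in> realization S \<longleftrightarrow> supp y \<in> S" if "y \<in> realization K" for y
    using that S(1) by (auto simp: realization_iff)
  have respects: "u \<in> S \<longleftrightarrow> p \<in> S" if "u = s \<or> p - s \<subseteq> u" "u \<subseteq> p" for u
    using S(2) that unfolding collapse_respects_def by blast
  have "supp x \<in> S \<longleftrightarrow> p \<in> S"
    using supp_star_cases [OF x sx] respects [of s] free_face_facts(2) by blast
  moreover have "supp (collapse_push s p t x) \<in> S \<longleftrightarrow> p \<in> S"
    using collapse_push_in_star(2,3) [OF x sx t0] by (intro respects) auto
  ultimately show ?thesis
    using in_S x collapse_push_in_star(1) [OF x sx t0] by simp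
qed

lemma collapse_push_1_in_realization:
  assumes x: "x \<in> realization K"
  shows "collapse_push s p 1 x \<in> realization (K - {s, p})"
proof (cases "s \<subseteq> supp x")
  case True
  have "supp (collapse_push s p 1 x) \<noteq> s" "supp (collapse_push s p 1 x) \<noteq> p"
    using collapse_push_in_star(2,4) [OF x True] free_face_facts by auto
  then show ?thesis
    using collapse_push_in_star(1) [OF x True] by (auto simp: realization_iff)
next
  case False
  then have "supp x \<noteq> s" "supp x \<noteq> p"
    using free_face_facts by auto
  then show ?thesis
    using x collapse_push_outside_star [OF x False] by (auto simp: realization_iff)
qed

lemma realization_diff_star:
  assumes "x \<in> realization (K - {s, p})"
  shows "x \<in> realization K" "\<not> s \<subseteq> supp x"
proof -
  show xK: "x \<in> realization K"
    using assms realization_mono [of "K - {s, p}" K] by blast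
  have "supp x \<noteq> s" "supp x \<noteq> p"
    using assms by (auto simp: realization_iff)
  then show "\<not> s \<subseteq> supp x"
    using supp_star_cases [OF xK] by blast
qed

lemma continuous_map_collapse_push:
  assumes g: "continuous_map Z (realization_top L) g" and t: "continuous_map Z euclideanreal t"
  shows "continuous_map Z (powertop_real UNIV) (\<lambda>u. collapse_push s p (t u) (g u))"
  unfolding continuous_map_componentwise_UNIV
proof
  fix v
  have coord: "continuous_map Z euclideanreal (\<lambda>u. g u w)" for w
  proof -
    have "continuous_map (realization_top L) euclideanreal (\<lambda>x. x w)"
      unfolding realization_top_def
      by (intro continuous_map_from_subtopology continuous_map_product_projection) auto
    then show ?thesis
      using continuous_map_compose [OF g] by (simp add: o_def)
  qed
  have "continuous_map Z euclideanreal (\<lambda>u. INF w\<in>s. g u w)"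
    using free_face_facts coord by (intro continuous_map_Inf) auto
  then have "continuous_map Z euclideanreal (\<lambda>u. Min (g u ` s))"
    using free_face_facts by (simp add: cInf_eq_Min)
  then show "continuous_map Z euclideanreal (\<lambda>u. collapse_push s p (t u) (g u) v)"
    unfolding collapse_push_def
    by (intro continuous_map_diff continuous_map_real_mult continuous_map_const [THEN iffD2]
        coord t) auto
qed

end

context elementary_collapse
begin

lemma stratified_homotopic_collapse_push:
  assumes S: "S \<subseteq> K" "collapse_respects S s p"
  shows "stratified_homotopic (realization_top K) (realization S)
           (realization_top K) (realization S) (collapse_push s p 1) id"
proof -
  define H where "H = (\<lambda>(x, t). collapse_push s p (1 - t) x)"
  have "continuous_map (prod_topology (realization_top K) (top_of_set {0..1}))
          (powertop_real UNIV) H"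
    unfolding H_def case_prod_unfold
    by (intro continuous_map_collapse_push [where L = K] continuous_map_fst continuous_map_diff
        continuous_map_snd [THEN continuous_map_into_fulltopology]
        continuous_map_const [THEN iffD2]) auto
  moreover have "H (x, t) \<in> realization K \<and> (H (x, t) \<in> realization S \<longleftrightarrow> x \<in> realization S)"
    if "x \<in> realization K" "t \<in> {0..1}" for x t
    using that collapse_push_in_realization realization_collapse_push_iff [OF S]
    by (simp add: H_def)
  ultimately have "stratified_map (prod_topology (realization_top K) (top_of_set {0..1}))
                     (realization S \<times> {0..1}) (realization_top K) (realization S) H"
    using realization_mono [OF S(1)]
    by (auto simp: stratified_map_def realization_top_def continuous_map_in_subtopology)
  moreover have "\<forall>x \<in> realization K. H (x, 0) = collapse_push s p 1 x \<and> H (x, 1) = id x"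
    by (simp add: H_def collapse_push_def)
  ultimately show ?thesis
    unfolding stratified_homotopic_def by auto
qed

theorem stratified_homotopy_equivalent_collapse:
  assumes S: "S \<subseteq> K" "collapse_respects S s p"
  shows "stratified_homotopy_equivalent (realization_top K) (realization S) k
           (realization_top (K - {s, p})) (realization (S - {s, p})) k"
proof -
  let ?X = "realization_top K" and ?Y = "realization_top (K - {s, p})"
  define r where "r = collapse_push s p 1"
  have S_diff: "realization (S - {s, p}) = realization S \<inter> realization (K - {s, p})"
    using S(1) by (auto simp: realization_iff)
  have r: "r x \<in> realization (K - {s, p})" "r x \<in> realization S \<longleftrightarrow> x \<in> realization S"
    if "x \<in> realization K" for x
    using that collapse_push_1_in_realization realization_collapse_push_iff [OF S, of x 1]
    by (auto simp: r_def)
  have "continuous_map ?X (powertop_real UNIV) r"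
    using continuous_map_collapse_push [of ?X K "\<lambda>x. x" "\<lambda>x. 1"] by (simp add: r_def)
  then have "stratified_map ?X (realization S) ?Y (realization (S - {s, p})) r"
    using r realization_mono [OF S(1)] unfolding stratified_map_def S_diff
    by (auto simp: realization_top_def continuous_map_in_subtopology)
  moreover have "stratified_map ?Y (realization (S - {s, p})) ?X (realization S) id"
    using realization_diff_star(1) unfolding stratified_map_def S_diff
    by (auto simp: realization_top_def continuous_map_in_subtopology
        continuous_map_from_subtopology)
  moreover have "stratified_homotopic ?X (realization S) ?X (realization S) (id \<circ> r) id"
    using stratified_homotopic_collapse_push [OF S] by (simp add: r_def)
  moreover have
    "stratified_homotopic ?Y (realization (S - {s, p})) ?Y (realization (S - {s, p})) (r \<circ> id) id"
    unfolding stratified_homotopic_def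
    by (intro exI [of _ fst] conjI)
      (auto simp: stratified_map_def continuous_map_fst r_def realization_diff_star
        collapse_push_outside_star)
  ultimately show ?thesis
    unfolding stratified_homotopy_equivalent_def by blast
qed

end

section \<open>Layered formal deformations\<close>

lemma (in elementary_collapse) star_faces_in_subcomplex:
  assumes "simplicial_complex L" "p \<in> L" "u = s \<or> p - s \<subseteq> u" "u \<subseteq> p"
  shows "u \<in> L"
proof -
  have "u \<noteq> {}"
    using assms(3) free_face_facts by auto
  then show ?thesis
    using assms(1,2,4) unfolding simplicial_complex_def by blast
qed

definition stratified_collapse :: "'v set set \<Rightarrow> 'v set set \<Rightarrow> 'v set set \<Rightarrow> 'v set set \<Rightarrow> bool" where
  "stratified_collapse K S K' S' \<longleftrightarrow>
     (\<exists>s p. elementary_collapse K s p \<and> S \<subseteq> K \<and> collapse_respects S s p \<and>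
            K' = K - {s, p} \<and> S' = S - {s, p})"

lemma elem_S_collapse_imp_stratified_collapse:
  assumes "elem_S_collapse (K, C, S) (K', C', S')"
  shows "stratified_collapse K S K' S'"
proof -
  obtain s p where lc: "layered_complex (K, C, S)" and p: "p \<in> S" and free: "free_in K s p"
    and L': "K' = K - {s, p}" "S' = S - {s, p}"
    using assms by (auto simp: elem_S_collapse_def)
  then have S: "simplicial_complex S" "S \<subseteq> K" and collapse: "elementary_collapse K s p"
    by (auto simp: layered_complex_def subcomplex_def elementary_collapse_def)
  then have "collapse_respects S s p"
    using p elementary_collapse.star_faces_in_subcomplex [OF collapse S(1) p]
    by (simp add: collapse_respects_def)
  then show ?thesis
    using collapse S(2) L' by (auto simp: stratified_collapse_def)
qed

lemma elem_C_collapse_imp_stratified_collapse: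
  assumes "elem_C_collapse (K, C, S) (K', C', S')"
  shows "stratified_collapse K S K' S'"
proof -
  obtain s p where lc: "layered_complex (K, C, S)" and p: "p \<in> C" and free: "free_in K s p"
    and L': "K' = K - {s, p}" "S' = S"
    using assms by (auto simp: elem_C_collapse_def)
  then have C: "simplicial_complex C" and S: "S \<subseteq> K" "C \<inter> S = {}"
    and collapse: "elementary_collapse K s p"
    by (auto simp: layered_complex_def subcomplex_def elementary_collapse_def)
  have "u \<notin> S" if "u = s \<or> p - s \<subseteq> u" "u \<subseteq> p" for u
    using elementary_collapse.star_faces_in_subcomplex [OF collapse C p that] S(2) by blast
  moreover have "s \<subset> p"
    using free by (simp add: free_in_def)
  ultimately have "collapse_respects S s p" "S - {s, p} = S"
    by (auto simp: collapse_respects_def)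
  then show ?thesis
    using collapse S(1) L' by (auto simp: stratified_collapse_def)
qed

lemma elem_IM_collapse_imp_stratified_collapse:
  assumes "elem_IM_collapse (K, C, S) (K', C', S')"
  shows "stratified_collapse K S K' S'"
proof -
  obtain s p where divided: "assoc_to_divided (K, C, S)" and p: "p \<in> IM (K, C, S)"
    and free: "free_in K s p" and faces_in_s: "\<forall>t\<in>S. t \<subset> p \<longrightarrow> t \<subset> s"
    and L': "K' = K - {s, p}" "S' = S"
    using assms by (auto simp: elem_IM_collapse_def)
  obtain K0 S0 where "divided_complex K0 S0" "(K, C, S) = associated_layered K0 S0"
    using divided by (auto simp: assoc_to_divided_def)
  then have collapse: "elementary_collapse K s p" and S: "S \<subseteq> K"
    using free by (auto simp: associated_layered_def divided_complex_def elementary_collapse_def)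
  have "p \<notin> S" "s \<subset> p"
    using p free by (auto simp: IM_def free_in_def)
  have "u \<notin> S" if u: "u = s \<or> p - s \<subseteq> u" "u \<subseteq> p" for u
  proof
    assume "u \<in> S"
    with u(2) \<open>p \<notin> S\<close> faces_in_s have "u \<subset> s"
      by blast
    with u(1) \<open>s \<subset> p\<close> show False
      by blast
  qed
  then have "collapse_respects S s p" "S - {s, p} = S"
    using \<open>p \<notin> S\<close> \<open>s \<subset> p\<close> by (auto simp: collapse_respects_def)
  then show ?thesis
    using collapse S L' by (auto simp: stratified_collapse_def)
qed

lemma stratified_collapse_imp_stratified_homotopy_equivalent:
  assumes "stratified_collapse K S K' S'"
  shows "stratified_homotopy_equivalent (realization_top K) (realization S) k
           (realization_top K') (realization S') k"
proof -
  obtain s p where collapse: "elementary_collapse K s p" "S \<subseteq> K" "collapse_respects S s p"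
    and L': "K' = K - {s, p}" "S' = S - {s, p}"
    using assms unfolding stratified_collapse_def by blast
  show ?thesis
    unfolding L' using collapse
    by (rule elementary_collapse.stratified_homotopy_equivalent_collapse)
qed

lemma elem_layered_collapse_imp_stratified_collapse:
  "elem_layered_collapse (K, C, S) (K', C', S') \<Longrightarrow> stratified_collapse K S K' S'"
  unfolding elem_layered_collapse_def
  using elem_S_collapse_imp_stratified_collapse elem_C_collapse_imp_stratified_collapse
    elem_IM_collapse_imp_stratified_collapse by blast

lemma stratified_homotopy_equivalent_sym:
  "stratified_homotopy_equivalent X \<Sigma>X kX Y \<Sigma>Y kY \<Longrightarrow>
   stratified_homotopy_equivalent Y \<Sigma>Y kY X \<Sigma>X kX"
  unfolding stratified_homotopy_equivalent_def by blast

lemma layered_step_imp_stratified_homotopy_equivalent: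
  assumes "layered_step (K, C, S) (K', C', S')"
  shows "stratified_homotopy_equivalent (realization_top K) (realization S) k
           (realization_top K') (realization S') k"
  using assms stratified_homotopy_equivalent_sym
    stratified_collapse_imp_stratified_homotopy_equivalent
    elem_layered_collapse_imp_stratified_collapse
  unfolding layered_step_def by blast

lemma IH_group_iso_layered_formal_deformation:
  assumes "layered_formal_deformation (K, C, S) (K', C', S')" and p: "perversity p"
  shows "IH_group (realization_top K) (realization S) k p i \<cong>
         IH_group (realization_top K') (realization S') k p i"
proof -
  have "IH_group (realization_top K) (realization S) k p i \<cong>
        IH_group (realization_top (fst L)) (realization (snd (snd L))) k p i"
    if "layered_step\<^sup>*\<^sup>* (K, C, S) L" for L
    using that
  proof (induction rule: rtranclp_induct)
    case (step L1 L2)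
    obtain K1 C1 S1 K2 C2 S2 where L: "L1 = (K1, C1, S1)" "L2 = (K2, C2, S2)"
      by (cases L1, cases L2)
    have "IH_group (realization_top K1) (realization S1) k p i \<cong>
          IH_group (realization_top K2) (realization S2) k p i"
      using layered_step_imp_stratified_homotopy_equivalent [OF step.hyps(2) [unfolded L]] p
      by (rule IH_group_iso_if_stratified_homotopy_equivalent)
    then show ?case
      using step.IH iso_trans by (simp add: L)
  qed simp
  then show ?thesis
    using assms(1) by (force simp: layered_formal_deformation_def)
qed

theorem corollary6p5:
  fixes K C S :: "'v set set" and S0 :: "'v set"
    and K' C' S' :: "'v set set"
    and X :: "'a topology" and \<Sigma> :: "'a set" and k :: nat
  assumes "divided_complex K S0"
    and "associated_layered K S0 = (K, C, S)"
    and "filtered_space X \<Sigma> k"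
    and "layered_formal_deformation (K, C, S) (K', C', S')"
    and "assoc_to_divided (K', C', S')"
    and "stratified_homotopy_equivalent (realization_top K') (realization S') k X \<Sigma> k"
  shows "\<forall>p. perversity p \<longrightarrow>
           (\<forall>i. IH_group (realization_top K) (realization S) k p i \<cong> IH_group X \<Sigma> k p i)"
proof (intro allI impI)
  fix p i assume p: "perversity p"
  have "IH_group (realization_top K) (realization S) k p i \<cong>
        IH_group (realization_top K') (realization S') k p i"
    using assms(4) p by (rule IH_group_iso_layered_formal_deformation)
  also have "\<dots> \<cong> IH_group X \<Sigma> k p i"
    using assms(6) p by (rule IH_group_iso_if_stratified_homotopy_equivalent)
  finally show "IH_group (realization_top K) (realization S) k p i \<cong> IH_group X \<Sigma> k p i" .
qed

end
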